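(* Let $\Omega\in\{\Omega_A,\Omega_B,\Omega_C\}$, let $x,y$ be commuting indeterminates and $f(x,y)=256x+3(4y-3)(4y+1)\in\mathbb C[x,y]$. For every $p(x,y)\in\mathbb C[x,y]$, one has $\sharp(p(\Omega,\delta))=0$ if and only if $f(x,y)$ divides $p(x,y)$ in $\mathbb C[x,y]$.
   Context: All algebras are unital associative over $\mathbb C$, $[x,y]=xy-yx$, $\mathbf i=\sqrt{-1}$. $U(\mathfrak{sl}_2)$ is generated by $E,F,H$ with $[H,E]=2E$, $[H,F]=-2F$, $[E,F]=H$; $\Lambda=EF+FE+\frac{H^2}{2}$. $\Re$ is generated by $A,B,C,\Delta$ with $[A,B]=[B,C]=[C,A]=2\Delta$ and with $\alpha=[A,\Delta]+AC-BA$, $\beta=[B,\Delta]+BA-CB$, $\gamma=[C,\Delta]+CB-AC$ central; $\delta=A+B+C$ (central). $\Omega_A=\Delta^2+\tfrac{BAC+CAB}{2}+A^2+B\gamma-C\beta-A\delta$, $\Omega_B=\Delta^2+\tfrac{CBA+ABC}{2}+B^2+C\alpha-A\gamma-B\delta$, $\Omega_C=\Delta^2+\tfrac{ACB+BCA}{2}+C^2+A\beta-B\alpha-C\delta$; these are central, so $p(\Omega,\delta)$ is well defined. $\sharp:\Re\to U(\mathfrak{sl}_2)$ is the unique algebra homomorphism with $A\mapsto \frac{(E+F-2)(E+F+2)}{16}$, $B\mapsto\frac{(H-2)(H+2)}{16}$, $C\mapsto\frac{(\mathbf iE-\mathbf iF-2)(\mathbf iE-\mathbf iF+2)}{16}$,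 $\Delta\mapsto\frac{(H+2)F^2-(H-2)E^2}{64}$. *)

theory Defs
  imports Complex_Main "HOL-Computational_Algebra.Polynomial"
begin

text \<open>An element of the free algebra on generators of type 'g is a
finitely supported coefficient function on words.\<close>

type_synonym 'g ncpoly = "'g list \<Rightarrow> complex"

definition nc_finite :: "'g ncpoly \<Rightarrow> bool" where
  "nc_finite a \<longleftrightarrow> finite {w. a w \<noteq> 0}"

definition nc_zero :: "'g ncpoly" where "nc_zero = (\<lambda>w. 0)"
definition nc_const :: "complex \<Rightarrow> 'g ncpoly" where
  "nc_const c = (\<lambda>w. if w = [] then c else 0)"
definition nc_one :: "'g ncpoly" where "nc_one = nc_const 1"
definition nc_gen :: "'g \<Rightarrow> 'g ncpoly" where
  "nc_gen g = (\<lambda>w. if w = [g] then 1 else 0)"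
definition nc_add :: "'g ncpoly \<Rightarrow> 'g ncpoly \<Rightarrow> 'g ncpoly" where
  "nc_add a b = (\<lambda>w. a w + b w)"
definition nc_sub :: "'g ncpoly \<Rightarrow> 'g ncpoly \<Rightarrow> 'g ncpoly" where
  "nc_sub a b = (\<lambda>w. a w - b w)"
definition nc_smult :: "complex \<Rightarrow> 'g ncpoly \<Rightarrow> 'g ncpoly" where
  "nc_smult c a = (\<lambda>w. c * a w)"
definition nc_mult :: "'g ncpoly \<Rightarrow> 'g ncpoly \<Rightarrow> 'g ncpoly" where
  "nc_mult a b = (\<lambda>w. \<Sum>i\<le>length w. a (take i w) * b (drop i w))"
definition nc_comm :: "'g ncpoly \<Rightarrow> 'g ncpoly \<Rightarrow> 'g ncpoly" where
  "nc_comm a b = nc_sub (nc_mult a b) (nc_mult b a)"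
fun nc_pow :: "'g ncpoly \<Rightarrow> nat \<Rightarrow> 'g ncpoly" where
  "nc_pow a 0 = nc_one"
| "nc_pow a (Suc n) = nc_mult a (nc_pow a n)"

inductive_set nc_ideal :: "'g ncpoly set \<Rightarrow> 'g ncpoly set" for R where
  gen: "r \<in> R \<Longrightarrow> r \<in> nc_ideal R"
| zero: "nc_zero \<in> nc_ideal R"
| add: "a \<in> nc_ideal R \<Longrightarrow> b \<in> nc_ideal R \<Longrightarrow> nc_add a b \<in> nc_ideal R"
| smult: "a \<in> nc_ideal R \<Longrightarrow> nc_smult c a \<in> nc_ideal R"
| lmult: "a \<in> nc_ideal R \<Longrightarrow> nc_finite u \<Longrightarrow> nc_mult u a \<in> nc_ideal R"
| rmult: "a \<in> nc_ideal R \<Longrightarrow> nc_finite u \<Longrightarrow> nc_mult a u \<in> nc_ideal R"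

text \<open>Substitution (algebra homomorphism from a free algebra determined by
images of the generators), applied to finitely supported elements.\<close>
definition nc_word_image :: "('g \<Rightarrow> 'h ncpoly) \<Rightarrow> 'g list \<Rightarrow> 'h ncpoly" where
  "nc_word_image \<phi> w = foldr (\<lambda>g acc. nc_mult (\<phi> g) acc) w nc_one"
definition nc_subst :: "('g \<Rightarrow> 'h ncpoly) \<Rightarrow> 'g ncpoly \<Rightarrow> 'h ncpoly" where
  "nc_subst \<phi> a = (\<lambda>v. \<Sum>w\<in>{w. a w \<noteq> 0}. a w * nc_word_image \<phi> w v)"

text \<open>Evaluation of p in C[x,y] (represented as (C[y])[x], i.e. complex poly poly,
outer variable x, inner variable y) at X, Y: sum of c_ij X^i Y^j.\<close>
definition nc_eval2 :: "'g ncpoly \<Rightarrow> 'g ncpoly \<Rightarrow> complex poly poly \<Rightarrow> 'g ncpoly" where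
  "nc_eval2 X Y p = (\<lambda>v. \<Sum>i\<le>degree p. \<Sum>j\<le>degree (coeff p i).
       nc_smult (coeff (coeff p i) j) (nc_mult (nc_pow X i) (nc_pow Y j)) v)"

datatype sl2gen = gE | gF | gH

definition uE :: "sl2gen ncpoly" where "uE = nc_gen gE"
definition uF :: "sl2gen ncpoly" where "uF = nc_gen gF"
definition uH :: "sl2gen ncpoly" where "uH = nc_gen gH"

definition sl2_rels :: "sl2gen ncpoly set" where
  "sl2_rels = { nc_sub (nc_comm uH uE) (nc_smult 2 uE),
                nc_add (nc_comm uH uF) (nc_smult 2 uF),
                nc_sub (nc_comm uE uF) uH }"

definition zero_in_Usl2 :: "sl2gen ncpoly \<Rightarrow> bool" where
  "zero_in_Usl2 a \<longleftrightarrow> a \<in> nc_ideal sl2_rels"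

datatype regen = gA | gB | gC | gD

definition rA :: "regen ncpoly" where "rA = nc_gen gA"
definition rB :: "regen ncpoly" where "rB = nc_gen gB"
definition rC :: "regen ncpoly" where "rC = nc_gen gC"
definition rD :: "regen ncpoly" where "rD = nc_gen gD"

definition r_alpha :: "regen ncpoly" where
  "r_alpha = nc_add (nc_comm rA rD) (nc_sub (nc_mult rA rC) (nc_mult rB rA))"
definition r_beta :: "regen ncpoly" where
  "r_beta = nc_add (nc_comm rB rD) (nc_sub (nc_mult rB rA) (nc_mult rC rB))"
definition r_gamma :: "regen ncpoly" where
  "r_gamma = nc_add (nc_comm rC rD) (nc_sub (nc_mult rC rB) (nc_mult rA rC))"
definition r_delta :: "regen ncpoly" where
  "r_delta = nc_add (nc_add rA rB) rC"

definition Re_rels :: "regen ncpoly set" where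
  "Re_rels = { nc_sub (nc_comm rA rB) (nc_smult 2 rD),
               nc_sub (nc_comm rB rC) (nc_smult 2 rD),
               nc_sub (nc_comm rC rA) (nc_smult 2 rD) }
     \<union> {nc_comm z (nc_gen g) | z g. z \<in> {r_alpha, r_beta, r_gamma}}"

definition r_mult3 :: "regen ncpoly \<Rightarrow> regen ncpoly \<Rightarrow> regen ncpoly \<Rightarrow> regen ncpoly" where
  "r_mult3 a b c = nc_mult a (nc_mult b c)"

definition OmegaA :: "regen ncpoly" where
  "OmegaA = nc_sub (nc_add (nc_add (nc_add (nc_mult rD rD)
      (nc_smult (1/2) (nc_add (r_mult3 rB rA rC) (r_mult3 rC rA rB))))
      (nc_mult rA rA)) (nc_sub (nc_mult rB r_gamma) (nc_mult rC r_beta)))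
      (nc_mult rA r_delta)"
definition OmegaB :: "regen ncpoly" where
  "OmegaB = nc_sub (nc_add (nc_add (nc_add (nc_mult rD rD)
      (nc_smult (1/2) (nc_add (r_mult3 rC rB rA) (r_mult3 rA rB rC))))
      (nc_mult rB rB)) (nc_sub (nc_mult rC r_alpha) (nc_mult rA r_gamma)))
      (nc_mult rB r_delta)"
definition OmegaC :: "regen ncpoly" where
  "OmegaC = nc_sub (nc_add (nc_add (nc_add (nc_mult rD rD)
      (nc_smult (1/2) (nc_add (r_mult3 rA rC rB) (r_mult3 rB rC rA))))
      (nc_mult rC rC)) (nc_sub (nc_mult rA r_beta) (nc_mult rB r_alpha)))
      (nc_mult rC r_delta)"

definition sharp_gen :: "regen \<Rightarrow> sl2gen ncpoly" where
  "sharp_gen g = (case g of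
     gA \<Rightarrow> nc_smult (1/16) (nc_mult (nc_sub (nc_add uE uF) (nc_const 2))
                                     (nc_add (nc_add uE uF) (nc_const 2)))
   | gB \<Rightarrow> nc_smult (1/16) (nc_mult (nc_sub uH (nc_const 2)) (nc_add uH (nc_const 2)))
   | gC \<Rightarrow> nc_smult (1/16)
            (nc_mult (nc_sub (nc_sub (nc_smult \<i> uE) (nc_smult \<i> uF)) (nc_const 2))
                     (nc_add (nc_sub (nc_smult \<i> uE) (nc_smult \<i> uF)) (nc_const 2)))
   | gD \<Rightarrow> nc_smult (1/64)
            (nc_sub (nc_mult (nc_add uH (nc_const 2)) (nc_mult uF uF))
                    (nc_mult (nc_sub uH (nc_const 2)) (nc_mult uE uE))))"

definition sharp :: "regen ncpoly \<Rightarrow> sl2gen ncpoly" where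
  "sharp = nc_subst sharp_gen"

text \<open>f(x,y) = 256 x + 3 (4y-3)(4y+1), outer variable x, inner variable y.\<close>
definition f_xy :: "complex poly poly" where
  "f_xy = [: smult 3 ([:-3, 4:] * [:1, 4:]), [:256:] :]"

end

theory Submission
  imports Defs
begin

text \<open>Under \<open>\<sharp>\<close> the three central elements \<open>\<Omega>\<^sub>A\<close>, \<open>\<Omega>\<^sub>B\<close>, \<open>\<Omega>\<^sub>C\<close> all map
  to \<open>g(\<sharp>\<delta>)\<close>, where \<open>g(y) = 9/256 + 3y/32 - 3y\<^sup>2/16\<close> solves \<open>f(g(y), y) = 0\<close>. This is a
  finite computation in \<open>U(\<frak>sl\<^sub>2)\<close>: after clearing denominators it is checked by reducing
  to normal forms in the PBW basis, using along the way that \<open>\<sharp>\<close> kills \<open>\<alpha>\<close>, \<open>\<beta>\<close>, \<open>\<gamma>\<close>.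
  Hence \<open>\<sharp>(p(\<Omega>, \<delta>)) = q(\<sharp>\<delta>)\<close> with \<open>q(y) = p(g(y), y)\<close>, and \<open>q = 0\<close> iff \<open>f\<close>
  divides \<open>p\<close>. Finally no nonzero polynomial in \<open>\<sharp>\<delta>\<close> vanishes: \<open>\<sharp>\<delta> = (\<Lambda> - 6)/8\<close> acts on
  the highest weight vector of the Verma module with indeterminate highest weight \<open>\<lambda>\<close> as
  multiplication by a quadratic polynomial in \<open>\<lambda>\<close>, so \<open>q(\<sharp>\<delta>)\<close> acts by a nonzero polynomial.\<close>

section \<open>The free algebra\<close>

abbreviation nc_supp :: "'g ncpoly \<Rightarrow> 'g list set" where
  "nc_supp a \<equiv> {w. a w \<noteq> 0}"

definition splits :: "'g list \<Rightarrow> ('g list \<times> 'g list) set" where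
  "splits w = {(u, v). u @ v = w}"

lemma splits_eq_image: "splits w = (\<lambda>i. (take i w, drop i w)) ` {..length w}"
  unfolding splits_def
proof safe
  fix u v assume "w = u @ v"
  then show "(u, v) \<in> (\<lambda>i. (take i (u @ v), drop i (u @ v))) ` {..length (u @ v)}"
    by (intro image_eqI[of _ _ "length u"]) auto
qed auto

lemma finite_splits [simp]: "finite (splits w)"
  by (simp add: splits_eq_image)

lemma nc_mult_splits: "nc_mult a b w = (\<Sum>(u, v)\<in>splits w. a u * b v)"
proof -
  have "inj_on (\<lambda>i. (take i w, drop i w)) {..length w}"
    by (intro inj_onI) (metis (no_types) Pair_inject atMost_iff length_take min.absorb2)
  then show ?thesis
    unfolding nc_mult_def splits_eq_image by (subst sum.reindex) (simp_all add: case_prod_beta)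
qed

lemma nc_mult_assoc: "nc_mult (nc_mult a b) c = nc_mult a (nc_mult b c)"
proof
  fix w
  have "nc_mult (nc_mult a b) c w
      = (\<Sum>p\<in>splits w. \<Sum>q\<in>splits (fst p). a (fst q) * b (snd q) * c (snd p))"
    by (simp add: nc_mult_splits sum_distrib_right case_prod_beta)
  also have "\<dots> = (\<Sum>(p, q)\<in>(SIGMA p:splits w. splits (fst p)). a (fst q) * b (snd q) * c (snd p))"
    by (rule sum.Sigma) auto
  also have "\<dots> = (\<Sum>(u, v, z)\<in>{(u, v, z). u @ v @ z = w}. a u * b v * c z)"
    by (rule sum.reindex_bij_witness[of _ "\<lambda>(u, v, z). ((u @ v, z), (u, v))"
          "\<lambda>(p, q). (fst q, snd q, snd p)"]) (auto simp: splits_def)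
  also have "\<dots> = (\<Sum>(p, q)\<in>(SIGMA p:splits w. splits (snd p)). a (fst p) * b (fst q) * c (snd q))"
    by (rule sum.reindex_bij_witness[of _ "\<lambda>(p, q). (fst p, fst q, snd q)"
          "\<lambda>(u, v, z). ((u, v @ z), (v, z))"]) (auto simp: splits_def)
  also have "\<dots> = (\<Sum>p\<in>splits w. \<Sum>q\<in>splits (snd p). a (fst p) * b (fst q) * c (snd q))"
    by (rule sum.Sigma[symmetric]) auto
  also have "\<dots> = nc_mult a (nc_mult b c) w"
    by (simp add: nc_mult_splits sum_distrib_left case_prod_beta mult.assoc)
  finally show "nc_mult (nc_mult a b) c w = nc_mult a (nc_mult b c) w" .
qed

lemma nc_mult_const_left: "nc_mult (nc_const c) a = nc_smult c a"
proof
  fix w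
  have "nc_mult (nc_const c) a w = (\<Sum>p\<in>splits w. if p = ([], w) then c * a w else 0)"
    unfolding nc_mult_splits
    by (rule sum.cong) (auto simp: nc_const_def splits_def split: if_splits)
  also have "\<dots> = c * a w"
    by (simp only: sum.delta finite_splits) (simp add: splits_def)
  finally show "nc_mult (nc_const c) a w = nc_smult c a w"
    by (simp add: nc_smult_def)
qed

lemma nc_mult_const_right: "nc_mult a (nc_const c) = nc_smult c a"
proof
  fix w
  have "nc_mult a (nc_const c) w = (\<Sum>p\<in>splits w. if p = (w, []) then c * a w else 0)"
    unfolding nc_mult_splits
    by (rule sum.cong) (auto simp: nc_const_def splits_def split: if_splits)
  also have "\<dots> = c * a w"
    by (simp only: sum.delta finite_splits) (simp add: splits_def)
  finally show "nc_mult a (nc_const c) w = nc_smult c a w"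
    by (simp add: nc_smult_def)
qed

lemma nc_mult_one_left [simp]: "nc_mult nc_one a = a"
  by (simp add: nc_one_def nc_mult_const_left nc_smult_def)

lemma nc_mult_one_right [simp]: "nc_mult a nc_one = a"
  by (simp add: nc_one_def nc_mult_const_right nc_smult_def)

lemma nc_mult_add_left: "nc_mult (nc_add a b) c = nc_add (nc_mult a c) (nc_mult b c)"
  by (simp add: nc_mult_def nc_add_def fun_eq_iff distrib_right sum.distrib)

lemma nc_mult_add_right: "nc_mult c (nc_add a b) = nc_add (nc_mult c a) (nc_mult c b)"
  by (simp add: nc_mult_def nc_add_def fun_eq_iff distrib_left sum.distrib)

lemma nc_mult_sub_left: "nc_mult (nc_sub a b) c = nc_sub (nc_mult a c) (nc_mult b c)"
  by (simp add: nc_mult_def nc_sub_def fun_eq_iff left_diff_distrib sum_subtractf)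

lemma nc_mult_sub_right: "nc_mult c (nc_sub a b) = nc_sub (nc_mult c a) (nc_mult c b)"
  by (simp add: nc_mult_def nc_sub_def fun_eq_iff right_diff_distrib sum_subtractf)

lemma nc_supp_mult: "nc_supp (nc_mult a b) \<subseteq> (\<lambda>(u, v). u @ v) ` (nc_supp a \<times> nc_supp b)"
proof
  fix w assume "w \<in> nc_supp (nc_mult a b)"
  then have "(\<Sum>(u, v)\<in>splits w. a u * b v) \<noteq> 0"
    by (simp add: nc_mult_splits)
  then obtain p where "p \<in> splits w" "(case p of (u, v) \<Rightarrow> a u * b v) \<noteq> 0"
    by (meson sum.not_neutral_contains_not_neutral)
  then show "w \<in> (\<lambda>(u, v). u @ v) ` (nc_supp a \<times> nc_supp b)"
    by (auto simp: splits_def image_iff split: prod.splits)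
qed

lemma nc_finite_const [simp]: "nc_finite (nc_const c)"
  unfolding nc_finite_def by (rule finite_subset[of _ "{[]}"]) (auto simp: nc_const_def)

lemma nc_finite_zero [simp]: "nc_finite nc_zero"
  by (simp add: nc_finite_def nc_zero_def)

lemma nc_finite_one [simp]: "nc_finite nc_one"
  by (simp add: nc_one_def)

lemma nc_finite_gen [simp]: "nc_finite (nc_gen g)"
  unfolding nc_finite_def by (rule finite_subset[of _ "{[g]}"]) (auto simp: nc_gen_def)

lemma nc_finite_add [simp]: "nc_finite a \<Longrightarrow> nc_finite b \<Longrightarrow> nc_finite (nc_add a b)"
  unfolding nc_finite_def
  by (rule finite_subset[of _ "nc_supp a \<union> nc_supp b"]) (auto simp: nc_add_def)

lemma nc_finite_sub [simp]: "nc_finite a \<Longrightarrow> nc_finite b \<Longrightarrow> nc_finite (nc_sub a b)"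
  unfolding nc_finite_def
  by (rule finite_subset[of _ "nc_supp a \<union> nc_supp b"]) (auto simp: nc_sub_def)

lemma nc_finite_smult [simp]: "nc_finite a \<Longrightarrow> nc_finite (nc_smult c a)"
  unfolding nc_finite_def
  by (rule finite_subset[of _ "nc_supp a"]) (auto simp: nc_smult_def)

lemma nc_finite_mult [simp]: "nc_finite a \<Longrightarrow> nc_finite b \<Longrightarrow> nc_finite (nc_mult a b)"
  unfolding nc_finite_def by (rule finite_subset[OF nc_supp_mult]) auto

lemma nc_finite_comm [simp]: "nc_finite a \<Longrightarrow> nc_finite b \<Longrightarrow> nc_finite (nc_comm a b)"
  by (simp add: nc_comm_def)

lemma nc_finite_pow [simp]: "nc_finite a \<Longrightarrow> nc_finite (nc_pow a n)"
  by (induction n) auto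

lemma nc_finite_sum [simp]:
  "finite I \<Longrightarrow> (\<And>i. i \<in> I \<Longrightarrow> nc_finite (F i)) \<Longrightarrow> nc_finite (\<lambda>w. \<Sum>i\<in>I. F i w)"
proof (induction I rule: finite_induct)
  case empty
  then show ?case by (simp add: nc_finite_def)
next
  case (insert i I)
  then have "nc_finite (nc_add (F i) (\<lambda>w. \<Sum>i\<in>I. F i w))" by simp
  then show ?case using insert by (simp add: nc_add_def)
qed

lemma sum_nc_mult:
  fixes g :: "complex \<Rightarrow> 'g list \<Rightarrow> 'b::comm_monoid_add"
  assumes fin: "finite Sa" "finite Sb" and supp: "nc_supp a \<subseteq> Sa" "nc_supp b \<subseteq> Sb"
    and g_sum: "\<And>x h (P :: ('g list \<times> 'g list) set). finite P \<Longrightarrow> g (sum h P) x = (\<Sum>p\<in>P. g (h p) x)"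
  shows "(\<Sum>x\<in>(\<lambda>(u, v). u @ v) ` (Sa \<times> Sb). g (nc_mult a b x) x)
       = (\<Sum>(u, v)\<in>Sa \<times> Sb. g (a u * b v) (u @ v))"
proof -
  let ?cat = "\<lambda>(u, v). u @ v :: 'g list"
  have fin_prod: "finite (Sa \<times> Sb)" using fin by auto
  have mult_eq: "nc_mult a b x = (\<Sum>p\<in>{p \<in> Sa \<times> Sb. ?cat p = x}. a (fst p) * b (snd p))" for x
  proof -
    have "nc_mult a b x = (\<Sum>p\<in>splits x. a (fst p) * b (snd p))"
      by (simp add: nc_mult_splits case_prod_beta)
    also have "\<dots> = (\<Sum>p\<in>splits x \<inter> (Sa \<times> Sb). a (fst p) * b (snd p))"
      by (rule sum.mono_neutral_right) (use supp in auto)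
    also have "splits x \<inter> (Sa \<times> Sb) = {p \<in> Sa \<times> Sb. ?cat p = x}"
      by (auto simp: splits_def)
    finally show ?thesis .
  qed
  have "(\<Sum>x\<in>?cat ` (Sa \<times> Sb). g (nc_mult a b x) x)
      = (\<Sum>x\<in>?cat ` (Sa \<times> Sb). \<Sum>p\<in>{p \<in> Sa \<times> Sb. ?cat p = x}. g (a (fst p) * b (snd p)) (?cat p))"
    unfolding mult_eq
    by (intro sum.cong refl, subst g_sum) (auto intro: finite_subset[OF _ fin_prod])
  also have "\<dots> = (\<Sum>p\<in>Sa \<times> Sb. g (a (fst p) * b (snd p)) (?cat p))"
    by (rule sum.image_gen[symmetric, OF fin_prod])
  finally show ?thesis
    by (simp add: case_prod_beta)
qed

lemma nc_word_image_Nil [simp]: "nc_word_image \<phi> [] = nc_one"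
  by (simp add: nc_word_image_def)

lemma nc_word_image_Cons [simp]: "nc_word_image \<phi> (g # w) = nc_mult (\<phi> g) (nc_word_image \<phi> w)"
  by (simp add: nc_word_image_def)

lemma nc_word_image_append:
  "nc_word_image \<phi> (u @ v) = nc_mult (nc_word_image \<phi> u) (nc_word_image \<phi> v)"
  by (induction u) (simp_all add: nc_mult_assoc)

lemma nc_finite_word_image: "(\<And>g. nc_finite (\<phi> g)) \<Longrightarrow> nc_finite (nc_word_image \<phi> w)"
  by (induction w) auto

lemma nc_subst_eq_sum:
  assumes "finite S" "nc_supp a \<subseteq> S"
  shows "nc_subst \<phi> a v = (\<Sum>w\<in>S. a w * nc_word_image \<phi> w v)"
  unfolding nc_subst_def by (rule sum.mono_neutral_left) (use assms in auto)

lemma nc_subst_add: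
  assumes "nc_finite a" "nc_finite b"
  shows "nc_subst \<phi> (nc_add a b) = nc_add (nc_subst \<phi> a) (nc_subst \<phi> b)"
proof
  fix v
  have fin: "finite (nc_supp a \<union> nc_supp b)" using assms by (simp add: nc_finite_def)
  show "nc_subst \<phi> (nc_add a b) v = nc_add (nc_subst \<phi> a) (nc_subst \<phi> b) v"
    unfolding nc_add_def
    by (subst (1 2 3) nc_subst_eq_sum[OF fin]) (auto simp: sum.distrib distrib_right)
qed

lemma nc_subst_sub:
  assumes "nc_finite a" "nc_finite b"
  shows "nc_subst \<phi> (nc_sub a b) = nc_sub (nc_subst \<phi> a) (nc_subst \<phi> b)"
proof
  fix v
  have fin: "finite (nc_supp a \<union> nc_supp b)" using assms by (simp add: nc_finite_def)
  show "nc_subst \<phi> (nc_sub a b) v = nc_sub (nc_subst \<phi> a) (nc_subst \<phi> b) v"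
    unfolding nc_sub_def
    by (subst (1 2 3) nc_subst_eq_sum[OF fin]) (auto simp: sum_subtractf left_diff_distrib)
qed

lemma nc_subst_smult:
  assumes "nc_finite a"
  shows "nc_subst \<phi> (nc_smult c a) = nc_smult c (nc_subst \<phi> a)"
proof
  fix v
  have fin: "finite (nc_supp a)" using assms by (simp add: nc_finite_def)
  show "nc_subst \<phi> (nc_smult c a) v = nc_smult c (nc_subst \<phi> a) v"
    unfolding nc_smult_def
    by (subst (1 2) nc_subst_eq_sum[OF fin]) (auto simp: sum_distrib_left mult.assoc)
qed

lemma nc_subst_zero [simp]: "nc_subst \<phi> nc_zero = nc_zero"
  by (simp add: nc_subst_def nc_zero_def)

lemma nc_subst_gen [simp]: "nc_subst \<phi> (nc_gen g) = \<phi> g"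
  by (rule ext, subst nc_subst_eq_sum[of "{[g]}"]) (auto simp: nc_gen_def)

lemma nc_subst_const [simp]: "nc_subst \<phi> (nc_const c) = nc_const c"
  by (rule ext, subst nc_subst_eq_sum[of "{[]}"]) (auto simp: nc_const_def nc_one_def)

lemma nc_subst_one [simp]: "nc_subst \<phi> nc_one = nc_one"
  by (simp add: nc_one_def)

lemma nc_subst_mult:
  assumes "nc_finite a" "nc_finite b"
  shows "nc_subst \<phi> (nc_mult a b) = nc_mult (nc_subst \<phi> a) (nc_subst \<phi> b)"
proof
  fix v
  let ?Sa = "nc_supp a" and ?Sb = "nc_supp b" and ?I = "nc_word_image \<phi>"
  have fin: "finite ?Sa" "finite ?Sb" using assms by (auto simp: nc_finite_def)
  have "nc_subst \<phi> (nc_mult a b) v = (\<Sum>x\<in>(\<lambda>(u, w). u @ w) ` (?Sa \<times> ?Sb). nc_mult a b x * ?I x v)"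
    by (rule nc_subst_eq_sum) (use fin nc_supp_mult in auto)
  also have "\<dots> = (\<Sum>(u, w)\<in>?Sa \<times> ?Sb. a u * b w * ?I (u @ w) v)"
    by (rule sum_nc_mult[OF fin, where g = "\<lambda>c x. c * ?I x v"]) (auto simp: sum_distrib_right)
  also have "\<dots> = (\<Sum>u\<in>?Sa. \<Sum>w\<in>?Sb. a u * b w * nc_mult (?I u) (?I w) v)"
    by (simp add: sum.cartesian_product nc_word_image_append case_prod_beta)
  also have "\<dots> = (\<Sum>u\<in>?Sa. \<Sum>w\<in>?Sb. \<Sum>n\<in>splits v. a u * b w * (?I u (fst n) * ?I w (snd n)))"
    by (simp add: nc_mult_splits sum_distrib_left case_prod_beta)
  also have "\<dots> = (\<Sum>n\<in>splits v. \<Sum>u\<in>?Sa. \<Sum>w\<in>?Sb. a u * b w * (?I u (fst n) * ?I w (snd n)))"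
    by (subst sum.swap) (rule sum.cong[OF refl], rule sum.swap)
  also have "\<dots> = nc_mult (nc_subst \<phi> a) (nc_subst \<phi> b) v"
    by (simp add: nc_mult_splits nc_subst_def sum_product case_prod_beta mult_ac)
  finally show "nc_subst \<phi> (nc_mult a b) v = nc_mult (nc_subst \<phi> a) (nc_subst \<phi> b) v" .
qed

lemma nc_finite_subst:
  assumes "nc_finite a" "\<And>g. nc_finite (\<phi> g)"
  shows "nc_finite (nc_subst \<phi> a)"
proof -
  have "nc_supp (nc_subst \<phi> a) \<subseteq> (\<Union>w\<in>nc_supp a. nc_supp (nc_word_image \<phi> w))"
  proof
    fix v assume "v \<in> nc_supp (nc_subst \<phi> a)"
    then have "(\<Sum>w\<in>nc_supp a. a w * nc_word_image \<phi> w v) \<noteq> 0"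
      by (simp add: nc_subst_def)
    then obtain w where "w \<in> nc_supp a" "a w * nc_word_image \<phi> w v \<noteq> 0"
      by (meson sum.not_neutral_contains_not_neutral)
    then show "v \<in> (\<Union>w\<in>nc_supp a. nc_supp (nc_word_image \<phi> w))" by auto
  qed
  moreover have "finite (\<Union>w\<in>nc_supp a. nc_supp (nc_word_image \<phi> w))"
    using assms nc_finite_word_image[of \<phi>] by (auto simp: nc_finite_def)
  ultimately show ?thesis
    unfolding nc_finite_def by (rule finite_subset)
qed

section \<open>A Verma module of generic highest weight\<close>

lemma smult_sum_right: "smult c (\<Sum>i\<in>A. p i) = (\<Sum>i\<in>A. smult c (p i))"
  by (induction A rule: infinite_finite_induct) (simp_all add: smult_add_right)

text \<open>A vector is given by its coordinates in the basis \<open>F\<^sup>k v\<^sub>0\<close> of the Verma module over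
  \<open>\<complex>[\<lambda>]\<close> with highest weight the indeterminate \<open>\<lambda>\<close>: \<open>F\<close> shifts the basis,
  \<open>H (F\<^sup>k v\<^sub>0) = (\<lambda> - 2k) F\<^sup>k v\<^sub>0\<close> and \<open>E (F\<^sup>k v\<^sub>0) = k (\<lambda> - k + 1) F\<^sup>k\<^sup>-\<^sup>1 v\<^sub>0\<close>.\<close>

type_synonym verma_vec = "nat \<Rightarrow> complex poly"

definition verma_E :: "verma_vec \<Rightarrow> verma_vec" where
  "verma_E v k = of_nat (Suc k) * ([:0, 1:] - of_nat k) * v (Suc k)"

definition verma_F :: "verma_vec \<Rightarrow> verma_vec" where
  "verma_F v k = (case k of 0 \<Rightarrow> 0 | Suc j \<Rightarrow> v j)"

definition verma_H :: "verma_vec \<Rightarrow> verma_vec" where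
  "verma_H v k = ([:0, 1:] - 2 * of_nat k) * v k"

primrec verma_gen :: "sl2gen \<Rightarrow> verma_vec \<Rightarrow> verma_vec" where
  "verma_gen gE = verma_E"
| "verma_gen gF = verma_F"
| "verma_gen gH = verma_H"

primrec verma_word :: "sl2gen list \<Rightarrow> verma_vec \<Rightarrow> verma_vec" where
  "verma_word [] v = v"
| "verma_word (g # w) v = verma_gen g (verma_word w v)"

definition verma_act :: "sl2gen ncpoly \<Rightarrow> verma_vec \<Rightarrow> verma_vec" where
  "verma_act a v k = (\<Sum>w\<in>nc_supp a. smult (a w) (verma_word w v k))"

lemma verma_word_append: "verma_word (u @ w) v = verma_word u (verma_word w v)"
  by (induction u) auto

lemma verma_gen_linear:
  "verma_gen g (\<lambda>k. p * v k + v' k) = (\<lambda>k. p * verma_gen g v k + verma_gen g v' k)"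
  by (cases g) (auto simp: verma_E_def verma_F_def verma_H_def fun_eq_iff algebra_simps
      split: nat.splits)

lemma verma_word_linear:
  "verma_word w (\<lambda>k. p * v k + v' k) = (\<lambda>k. p * verma_word w v k + verma_word w v' k)"
  by (induction w) (auto simp: verma_gen_linear)

lemma verma_word_zero: "verma_word w (\<lambda>k. 0) = (\<lambda>k. 0)"
proof (induction w)
  case (Cons g w)
  then show ?case
    by (cases g) (simp_all add: verma_E_def verma_F_def verma_H_def fun_eq_iff split: nat.splits)
qed simp

lemma verma_word_scale: "verma_word w (\<lambda>k. p * v k) = (\<lambda>k. p * verma_word w v k)"
  using verma_word_linear[of w p v "\<lambda>k. 0"] by (simp add: verma_word_zero)

lemma verma_word_sum:
  "finite A \<Longrightarrow> verma_word w (\<lambda>k. \<Sum>i\<in>A. smult (c i) (v i k))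
     = (\<lambda>k. \<Sum>i\<in>A. smult (c i) (verma_word w (v i) k))"
proof (induction A rule: finite_induct)
  case empty
  then show ?case by (simp add: verma_word_zero)
next
  case (insert i A)
  then show ?case
    using verma_word_linear[of w "[:c i:]" "v i"] by simp
qed

lemma verma_act_eq_sum:
  assumes "finite S" "nc_supp a \<subseteq> S"
  shows "verma_act a v k = (\<Sum>w\<in>S. smult (a w) (verma_word w v k))"
  unfolding verma_act_def by (rule sum.mono_neutral_left) (use assms in auto)

lemma verma_act_add:
  assumes "nc_finite a" "nc_finite b"
  shows "verma_act (nc_add a b) v k = verma_act a v k + verma_act b v k"
proof -
  have fin: "finite (nc_supp a \<union> nc_supp b)" using assms by (simp add: nc_finite_def)
  show ?thesis
    by (subst (1 2 3) verma_act_eq_sum[OF fin]) (auto simp: nc_add_def sum.distrib smult_add_left)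
qed

lemma verma_act_sub:
  assumes "nc_finite a" "nc_finite b"
  shows "verma_act (nc_sub a b) v k = verma_act a v k - verma_act b v k"
proof -
  have fin: "finite (nc_supp a \<union> nc_supp b)" using assms by (simp add: nc_finite_def)
  show ?thesis
    by (subst (1 2 3) verma_act_eq_sum[OF fin]) (auto simp: nc_sub_def sum_subtractf smult_diff_left)
qed

lemma verma_act_smult:
  assumes "nc_finite a"
  shows "verma_act (nc_smult c a) v k = smult c (verma_act a v k)"
proof -
  have fin: "finite (nc_supp a)" using assms by (simp add: nc_finite_def)
  show ?thesis
    by (subst (1 2) verma_act_eq_sum[OF fin]) (auto simp: nc_smult_def smult_sum_right)
qed

lemma verma_act_zero [simp]: "verma_act nc_zero v = (\<lambda>k. 0)"
  by (simp add: verma_act_def nc_zero_def fun_eq_iff)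

lemma verma_act_zero_vec [simp]: "verma_act a (\<lambda>k. 0) = (\<lambda>k. 0)"
  by (simp add: verma_act_def verma_word_zero fun_eq_iff)

lemma verma_act_gen: "verma_act (nc_gen g) = verma_gen g"
  by (intro ext, subst verma_act_eq_sum[of "{[g]}"]) (auto simp: nc_gen_def)

lemma verma_act_const: "verma_act (nc_const c) v k = smult c (v k)"
  by (subst verma_act_eq_sum[of "{[]}"]) (auto simp: nc_const_def)

lemma verma_act_mult:
  assumes "nc_finite a" "nc_finite b"
  shows "verma_act (nc_mult a b) v = verma_act a (verma_act b v)"
proof
  fix k
  let ?Sa = "nc_supp a" and ?Sb = "nc_supp b"
  have fin: "finite ?Sa" "finite ?Sb" using assms by (auto simp: nc_finite_def)
  have "verma_act (nc_mult a b) v k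
      = (\<Sum>x\<in>(\<lambda>(u, w). u @ w) ` (?Sa \<times> ?Sb). smult (nc_mult a b x) (verma_word x v k))"
    by (rule verma_act_eq_sum) (use fin nc_supp_mult in auto)
  also have "\<dots> = (\<Sum>(u, w)\<in>?Sa \<times> ?Sb. smult (a u * b w) (verma_word (u @ w) v k))"
    by (rule sum_nc_mult[OF fin, where g = "\<lambda>c x. smult c (verma_word x v k)"])
      (auto simp: smult_sum)
  also have "\<dots> = (\<Sum>u\<in>?Sa. \<Sum>w\<in>?Sb. smult (a u) (smult (b w) (verma_word u (verma_word w v) k)))"
    by (simp add: sum.cartesian_product verma_word_append case_prod_beta)
  also have "\<dots> = (\<Sum>u\<in>?Sa. smult (a u) (verma_word u (\<lambda>k. \<Sum>w\<in>?Sb. smult (b w) (verma_word w v k)) k))"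
    by (simp add: verma_word_sum[OF fin(2)] smult_sum_right)
  also have "\<dots> = verma_act a (verma_act b v) k"
    by (simp add: verma_act_def[abs_def])
  finally show "verma_act (nc_mult a b) v k = verma_act a (verma_act b v) k" .
qed

lemma verma_act_comm:
  assumes "nc_finite a" "nc_finite b"
  shows "verma_act (nc_comm a b) v k = verma_act a (verma_act b v) k - verma_act b (verma_act a v) k"
  using assms by (simp add: nc_comm_def verma_act_sub verma_act_mult)

lemma verma_act_sl2_rels:
  assumes "r \<in> sl2_rels"
  shows "verma_act r v = (\<lambda>k. 0)"
proof
  fix k
  from assms show "verma_act r v k = 0"
    unfolding sl2_rels_def uE_def uF_def uH_def
    by (cases k) (auto simp: verma_act_add verma_act_sub verma_act_smult verma_act_comm
        verma_act_gen verma_E_def verma_F_def verma_H_def of_nat_Suc algebra_simps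
        numeral_mult_conv_smult[symmetric])
qed

text \<open>Finiteness is part of the induction since the action is only multiplicative on finite
  elements.\<close>

lemma sl2_ideal_finite_annihilating:
  "a \<in> nc_ideal sl2_rels \<Longrightarrow> nc_finite a \<and> (\<forall>v. verma_act a v = (\<lambda>k. 0))"
proof (induction rule: nc_ideal.induct)
  case (gen r)
  then show ?case
    by (auto simp: sl2_rels_def uE_def uF_def uH_def verma_act_sl2_rels)
next
  case (lmult a u)
  then show ?case by (simp add: verma_act_mult)
qed (simp_all add: verma_act_add verma_act_smult verma_act_mult fun_eq_iff)

section \<open>The enveloping algebra as a quotient ring\<close>

definition usl2_rel :: "sl2gen ncpoly \<Rightarrow> sl2gen ncpoly \<Rightarrow> bool" where
  "usl2_rel a b \<longleftrightarrow> nc_finite a \<and> nc_finite b \<and> nc_sub a b \<in> nc_ideal sl2_rels"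

lemma nc_ideal_sub: "a \<in> nc_ideal R \<Longrightarrow> b \<in> nc_ideal R \<Longrightarrow> nc_sub a b \<in> nc_ideal R"
  using nc_ideal.add[OF _ nc_ideal.smult[of b R "-1"], of a]
  by (simp add: nc_sub_def nc_add_def nc_smult_def)

lemma usl2_rel_eqI: "nc_finite a \<Longrightarrow> a = b \<Longrightarrow> usl2_rel a b"
  using nc_ideal.zero[of sl2_rels] by (simp add: usl2_rel_def nc_sub_def nc_zero_def)

lemma part_equivp_usl2_rel: "part_equivp usl2_rel"
proof (rule part_equivpI)
  show "\<exists>x. usl2_rel x x"
    using usl2_rel_eqI[of nc_zero] by auto
  show "symp usl2_rel"
  proof (rule sympI)
    fix a b assume "usl2_rel a b"
    moreover have "nc_smult (-1) (nc_sub a b) = nc_sub b a"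
      by (simp add: nc_sub_def nc_smult_def fun_eq_iff)
    ultimately show "usl2_rel b a"
      using nc_ideal.smult[of "nc_sub a b" sl2_rels "-1"] by (simp add: usl2_rel_def)
  qed
  show "transp usl2_rel"
  proof (rule transpI)
    fix a b c assume "usl2_rel a b" "usl2_rel b c"
    moreover have "nc_add (nc_sub a b) (nc_sub b c) = nc_sub a c"
      by (simp add: nc_sub_def nc_add_def fun_eq_iff)
    ultimately show "usl2_rel a c"
      using nc_ideal.add[of "nc_sub a b" sl2_rels "nc_sub b c"] by (simp add: usl2_rel_def)
  qed
qed

quotient_type usl2 = "sl2gen ncpoly" / partial: usl2_rel
  morphisms rep_usl2 abs_usl2
  by (rule part_equivp_usl2_rel)

lemma usl2_rel_add: "usl2_rel a a' \<Longrightarrow> usl2_rel b b' \<Longrightarrow> usl2_rel (nc_add a b) (nc_add a' b')"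
proof -
  assume "usl2_rel a a'" "usl2_rel b b'"
  moreover have "nc_sub (nc_add a b) (nc_add a' b') = nc_add (nc_sub a a') (nc_sub b b')"
    by (simp add: nc_sub_def nc_add_def fun_eq_iff)
  ultimately show ?thesis by (simp add: usl2_rel_def nc_ideal.add)
qed

lemma usl2_rel_sub: "usl2_rel a a' \<Longrightarrow> usl2_rel b b' \<Longrightarrow> usl2_rel (nc_sub a b) (nc_sub a' b')"
proof -
  assume "usl2_rel a a'" "usl2_rel b b'"
  moreover have "nc_sub (nc_sub a b) (nc_sub a' b') = nc_sub (nc_sub a a') (nc_sub b b')"
    by (simp add: nc_sub_def fun_eq_iff)
  ultimately show ?thesis by (simp add: usl2_rel_def nc_ideal_sub)
qed

lemma usl2_rel_smult: "usl2_rel a a' \<Longrightarrow> usl2_rel (nc_smult c a) (nc_smult c a')"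
proof -
  assume "usl2_rel a a'"
  moreover have "nc_sub (nc_smult c a) (nc_smult c a') = nc_smult c (nc_sub a a')"
    by (simp add: nc_sub_def nc_smult_def fun_eq_iff algebra_simps)
  ultimately show ?thesis by (simp add: usl2_rel_def nc_ideal.smult)
qed

lemma usl2_rel_mult: "usl2_rel a a' \<Longrightarrow> usl2_rel b b' \<Longrightarrow> usl2_rel (nc_mult a b) (nc_mult a' b')"
proof -
  assume ra: "usl2_rel a a'" and rb: "usl2_rel b b'"
  have "nc_sub (nc_mult a b) (nc_mult a' b')
      = nc_add (nc_mult (nc_sub a a') b) (nc_mult a' (nc_sub b b'))"
    by (simp only: nc_mult_sub_left nc_mult_sub_right) (simp add: nc_sub_def nc_add_def fun_eq_iff)
  then show ?thesis
    using ra rb by (simp add: usl2_rel_def nc_ideal.add nc_ideal.lmult nc_ideal.rmult)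
qed

text \<open>The Verma module is a module over the quotient; this is what separates \<open>0\<close> from \<open>1\<close>.\<close>

lift_definition usl2_act :: "usl2 \<Rightarrow> verma_vec \<Rightarrow> verma_vec" is verma_act
proof -
  fix a b assume rel: "usl2_rel a b"
  then have "verma_act a v k - verma_act b v k = 0" for v k
    using sl2_ideal_finite_annihilating[of "nc_sub a b"]
    by (simp add: usl2_rel_def verma_act_sub fun_eq_iff)
  then show "verma_act a = verma_act b" by (simp add: fun_eq_iff)
qed

instantiation usl2 :: ring_1
begin

lift_definition zero_usl2 :: usl2 is nc_zero by (simp add: usl2_rel_eqI)
lift_definition one_usl2 :: usl2 is nc_one by (simp add: usl2_rel_eqI)
lift_definition plus_usl2 :: "usl2 \<Rightarrow> usl2 \<Rightarrow> usl2" is nc_add by (rule usl2_rel_add)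
lift_definition minus_usl2 :: "usl2 \<Rightarrow> usl2 \<Rightarrow> usl2" is nc_sub by (rule usl2_rel_sub)
lift_definition uminus_usl2 :: "usl2 \<Rightarrow> usl2" is "nc_smult (-1)" by (rule usl2_rel_smult)
lift_definition times_usl2 :: "usl2 \<Rightarrow> usl2 \<Rightarrow> usl2" is nc_mult by (rule usl2_rel_mult)

instance
proof
  fix a b c :: usl2
  show "a + b + c = a + (b + c)"
    by transfer (rule usl2_rel_eqI, simp add: usl2_rel_def, simp add: nc_add_def add.assoc fun_eq_iff)
  show "a + b = b + a"
    by transfer (rule usl2_rel_eqI, simp add: usl2_rel_def, simp add: nc_add_def add.commute fun_eq_iff)
  show "0 + a = a"
    by transfer (rule usl2_rel_eqI, simp add: usl2_rel_def, simp add: nc_add_def nc_zero_def fun_eq_iff)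
  show "- a + a = 0"
    by transfer
      (rule usl2_rel_eqI, simp add: usl2_rel_def, simp add: nc_add_def nc_smult_def nc_zero_def fun_eq_iff)
  show "a - b = a + - b"
    by transfer
      (rule usl2_rel_eqI, simp add: usl2_rel_def, simp add: nc_add_def nc_sub_def nc_smult_def fun_eq_iff)
  show "a * b * c = a * (b * c)"
    by transfer (rule usl2_rel_eqI, simp add: usl2_rel_def, simp add: nc_mult_assoc fun_eq_iff)
  show "1 * a = a"
    by transfer (rule usl2_rel_eqI, simp add: usl2_rel_def, simp add: fun_eq_iff)
  show "a * 1 = a"
    by transfer (rule usl2_rel_eqI, simp add: usl2_rel_def, simp add: fun_eq_iff)
  show "(a + b) * c = a * c + b * c"
    by transfer (rule usl2_rel_eqI, simp add: usl2_rel_def, simp add: nc_mult_add_left fun_eq_iff)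
  show "a * (b + c) = a * b + a * c"
    by transfer (rule usl2_rel_eqI, simp add: usl2_rel_def, simp add: nc_mult_add_right fun_eq_iff)
  have "usl2_act 1 (\<lambda>k. 1) 0 \<noteq> usl2_act 0 (\<lambda>k. 1) 0"
    by transfer (simp add: nc_one_def verma_act_const)
  then show "(0::usl2) \<noteq> 1" by metis
qed

end

lemma abs_usl2_mult: "nc_finite a \<Longrightarrow> nc_finite b \<Longrightarrow> abs_usl2 (nc_mult a b) = abs_usl2 a * abs_usl2 b"
  by (simp add: times_usl2.abs_eq usl2_rel_eqI)

lemma abs_usl2_add: "nc_finite a \<Longrightarrow> nc_finite b \<Longrightarrow> abs_usl2 (nc_add a b) = abs_usl2 a + abs_usl2 b"
  by (simp add: plus_usl2.abs_eq usl2_rel_eqI)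

lemma abs_usl2_sub: "nc_finite a \<Longrightarrow> nc_finite b \<Longrightarrow> abs_usl2 (nc_sub a b) = abs_usl2 a - abs_usl2 b"
  by (simp add: minus_usl2.abs_eq usl2_rel_eqI)

lemma abs_usl2_zero: "abs_usl2 nc_zero = 0"
  by (simp add: zero_usl2.abs_eq)

lemma abs_usl2_one: "abs_usl2 nc_one = 1"
  by (simp add: one_usl2.abs_eq)

lemma abs_usl2_comm:
  "nc_finite a \<Longrightarrow> nc_finite b \<Longrightarrow> abs_usl2 (nc_comm a b) = abs_usl2 a * abs_usl2 b - abs_usl2 b * abs_usl2 a"
  by (simp add: nc_comm_def abs_usl2_sub abs_usl2_mult)

lemma abs_usl2_eq_0_iff:
  assumes fin: "nc_finite a"
  shows "abs_usl2 a = 0 \<longleftrightarrow> a \<in> nc_ideal sl2_rels"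
proof -
  have "abs_usl2 a = abs_usl2 nc_zero \<longleftrightarrow> usl2_rel a nc_zero"
    using Quotient3_rel[OF Quotient3_usl2, of a nc_zero] usl2_rel_eqI[OF fin refl]
      usl2_rel_eqI[OF nc_finite_zero refl] by blast
  moreover have "nc_sub a nc_zero = a"
    by (simp add: nc_sub_def nc_zero_def)
  ultimately show ?thesis
    by (simp add: abs_usl2_zero usl2_rel_def fin)
qed

lemma usl2_cases: obtains a where "nc_finite a" "x = abs_usl2 a"
proof -
  have "usl2_rel (rep_usl2 x) (rep_usl2 x)"
    by (rule Quotient3_rep_reflp[OF Quotient3_usl2])
  then show ?thesis
    using that Quotient3_abs_rep[OF Quotient3_usl2, of x] by (auto simp: usl2_rel_def)
qed

definition usl2_const :: "complex \<Rightarrow> usl2" where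
  "usl2_const c = abs_usl2 (nc_const c)"

lemma abs_usl2_smult: "nc_finite a \<Longrightarrow> abs_usl2 (nc_smult c a) = usl2_const c * abs_usl2 a"
  by (simp add: usl2_const_def abs_usl2_mult[symmetric] nc_mult_const_left)

lemma usl2_const_add: "usl2_const (c + d) = usl2_const c + usl2_const d"
proof -
  have eq: "nc_const (c + d) = nc_add (nc_const c) (nc_const d)"
    by (simp add: nc_const_def nc_add_def fun_eq_iff)
  show ?thesis unfolding usl2_const_def eq by (simp add: abs_usl2_add)
qed

lemma usl2_const_mult: "usl2_const (c * d) = usl2_const c * usl2_const d"
proof -
  have eq: "nc_const (c * d) = nc_mult (nc_const c) (nc_const d)"
    unfolding nc_mult_const_left by (simp add: nc_const_def nc_smult_def fun_eq_iff)
  show ?thesis unfolding usl2_const_def eq by (simp add: abs_usl2_mult)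
qed

lemma usl2_const_one [simp]: "usl2_const 1 = 1"
  by (simp add: usl2_const_def abs_usl2_one[symmetric] nc_one_def)

lemma usl2_const_zero [simp]: "usl2_const 0 = 0"
proof -
  have eq: "nc_const 0 = nc_zero" by (simp add: nc_const_def nc_zero_def fun_eq_iff)
  show ?thesis unfolding usl2_const_def eq by (rule abs_usl2_zero)
qed

lemma usl2_const_minus: "usl2_const (- c) = - usl2_const c"
  by (rule minus_unique[symmetric]) (simp add: usl2_const_add[symmetric])

lemma usl2_const_of_nat [simp]: "usl2_const (of_nat n) = of_nat n"
  by (induction n) (simp_all add: usl2_const_add)

lemma usl2_const_numeral [simp]: "usl2_const (numeral n) = numeral n"
  using usl2_const_of_nat[of "numeral n"] by simp

lemma usl2_const_commute: "usl2_const c * x = x * usl2_const c"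
proof -
  obtain a where "nc_finite a" "x = abs_usl2 a" by (rule usl2_cases)
  then show ?thesis
    by (simp add: usl2_const_def abs_usl2_mult[symmetric] nc_mult_const_left nc_mult_const_right)
qed

lemma usl2_const_left_commute: "x * (usl2_const c * y) = usl2_const c * (x * y)"
  by (metis mult.assoc usl2_const_commute)

lemma usl2_const_mult_left: "usl2_const c * (usl2_const d * x) = usl2_const (c * d) * x"
  by (simp add: usl2_const_mult mult.assoc)

lemma usl2_act_abs: "nc_finite a \<Longrightarrow> usl2_act (abs_usl2 a) = verma_act a"
  by (simp add: usl2_act.abs_eq usl2_rel_eqI)

lemma usl2_act_mult: "usl2_act (x * y) = usl2_act x \<circ> usl2_act y"
  by transfer (simp add: verma_act_mult usl2_rel_def fun_eq_iff)

definition sl2_E :: usl2 where "sl2_E = abs_usl2 uE"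
definition sl2_F :: usl2 where "sl2_F = abs_usl2 uF"
definition sl2_H :: usl2 where "sl2_H = abs_usl2 uH"

lemma nc_finite_sl2_gens [simp]: "nc_finite uE" "nc_finite uF" "nc_finite uH"
  by (simp_all add: uE_def uF_def uH_def)

lemma abs_usl2_sl2_rels:
  assumes "r \<in> sl2_rels"
  shows "abs_usl2 r = 0"
  using sl2_ideal_finite_annihilating[OF nc_ideal.gen[OF assms]]
  by (simp add: abs_usl2_eq_0_iff nc_ideal.gen[OF assms])

lemma sl2_H_E: "sl2_H * sl2_E = sl2_E * sl2_H + 2 * sl2_E"
  using abs_usl2_sl2_rels[of "nc_sub (nc_comm uH uE) (nc_smult 2 uE)"]
  by (simp add: sl2_rels_def abs_usl2_sub abs_usl2_comm abs_usl2_smult sl2_E_def sl2_H_def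
      algebra_simps)

lemma sl2_H_F: "sl2_H * sl2_F = sl2_F * sl2_H - 2 * sl2_F"
  using abs_usl2_sl2_rels[of "nc_add (nc_comm uH uF) (nc_smult 2 uF)"]
  by (simp add: sl2_rels_def abs_usl2_add abs_usl2_comm abs_usl2_smult sl2_F_def sl2_H_def
      algebra_simps eq_neg_iff_add_eq_0)

lemma sl2_E_F: "sl2_E * sl2_F = sl2_F * sl2_E + sl2_H"
  using abs_usl2_sl2_rels[of "nc_sub (nc_comm uE uF) uH"]
  by (simp add: sl2_rels_def abs_usl2_sub abs_usl2_comm sl2_E_def sl2_F_def sl2_H_def
      algebra_simps)

lemma sl2_E_H: "sl2_E * sl2_H = sl2_H * sl2_E - 2 * sl2_E"
  by (simp add: sl2_H_E)

lemma mult_of_int_left_commute: "x * (of_int n * y) = of_int n * (x * (y :: 'a :: ring_1))"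
  by (metis mult.assoc mult_of_int_commute)

lemma mult_of_nat_left_commute: "x * (of_nat n * y) = of_nat n * (x * (y :: 'a :: semiring_1))"
  by (metis mult.assoc mult_of_nat_commute)

lemma sl2_H_F_pow: "sl2_H * sl2_F ^ a = sl2_F ^ a * sl2_H - of_nat (2 * a) * sl2_F ^ a"
proof (induction a)
  case (Suc a)
  have "sl2_H * sl2_F ^ Suc a = (sl2_H * sl2_F) * sl2_F ^ a"
    by (simp add: mult.assoc)
  also have "\<dots> = sl2_F * (sl2_H * sl2_F ^ a) - 2 * (sl2_F * sl2_F ^ a)"
    by (simp add: sl2_H_F algebra_simps)
  also have "\<dots> = sl2_F ^ Suc a * sl2_H - of_nat (2 * Suc a) * sl2_F ^ Suc a"
    by (simp add: Suc algebra_simps mult_of_nat_left_commute mult_2)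
  finally show ?case .
qed simp

lemma sl2_E_F_pow:
  "sl2_E * sl2_F ^ Suc a
     = sl2_F ^ Suc a * sl2_E + of_nat (Suc a) * (sl2_F ^ a * sl2_H) - of_nat (Suc a * a) * sl2_F ^ a"
proof (induction a)
  case (Suc a)
  let ?F = sl2_F and ?E = sl2_E and ?H = sl2_H
  have "?E * ?F ^ Suc (Suc a) = (?E * ?F) * ?F ^ Suc a"
    by (simp only: power_Suc mult.assoc)
  also have "\<dots> = ?F * (?E * ?F ^ Suc a) + ?H * ?F ^ Suc a"
    by (simp add: sl2_E_F algebra_simps)
  also have "\<dots> = ?F ^ Suc (Suc a) * ?E + (of_nat (Suc a) + 1) * (?F ^ Suc a * ?H)
      - (of_nat (Suc a * a) + of_nat (2 * Suc a)) * ?F ^ Suc a"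
    unfolding Suc sl2_H_F_pow
    by (simp add: distrib_left right_diff_distrib mult_of_nat_left_commute algebra_simps
        del: of_nat_Suc of_nat_mult of_nat_add)
  also have "of_nat (Suc a) + 1 = (of_nat (Suc (Suc a)) :: usl2)"
    by simp
  also have "of_nat (Suc a * a) + of_nat (2 * Suc a) = (of_nat (Suc (Suc a) * Suc a) :: usl2)"
    unfolding of_nat_add[symmetric] by (rule arg_cong[where f = of_nat]) simp
  finally show ?case .
qed (simp add: sl2_E_F)

section \<open>Normal forms in the PBW basis\<close>

text \<open>A normal form lists exponent triples \<open>(a, b, c)\<close>, standing for \<open>F\<^sup>a H\<^sup>b E\<^sup>c\<close>,
  with integer coefficients; integrality keeps the checks by \<open>code_simp\<close> fast.\<close>

type_synonym pbw_poly = "((nat \<times> nat \<times> nat) \<times> int) list"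

definition pbw_monomial :: "nat \<times> nat \<times> nat \<Rightarrow> usl2" where
  "pbw_monomial m = (case m of (a, b, c) \<Rightarrow> sl2_F ^ a * sl2_H ^ b * sl2_E ^ c)"

definition eval_pbw :: "pbw_poly \<Rightarrow> usl2" where
  "eval_pbw P = (\<Sum>(m, q)\<leftarrow>P. of_int q * pbw_monomial m)"

lemma eval_pbw_Nil [simp]: "eval_pbw [] = 0"
  by (simp add: eval_pbw_def)

lemma eval_pbw_Cons [simp]: "eval_pbw ((m, q) # P) = of_int q * pbw_monomial m + eval_pbw P"
  by (simp add: eval_pbw_def)

lemma eval_pbw_append [simp]: "eval_pbw (P @ Q) = eval_pbw P + eval_pbw Q"
  by (simp add: eval_pbw_def)

definition pbw_smult :: "int \<Rightarrow> pbw_poly \<Rightarrow> pbw_poly" where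
  "pbw_smult q P = map (\<lambda>(m, c). (m, q * c)) P"

lemma eval_pbw_smult: "eval_pbw (pbw_smult q P) = of_int q * eval_pbw P"
  by (induction P) (auto simp: pbw_smult_def distrib_left mult.assoc)

definition pbw_lift :: "(nat \<times> nat \<times> nat \<Rightarrow> pbw_poly) \<Rightarrow> pbw_poly \<Rightarrow> pbw_poly" where
  "pbw_lift f P = concat (map (\<lambda>(m, q). pbw_smult q (f m)) P)"

lemma eval_pbw_lift:
  assumes "\<And>m. eval_pbw (f m) = x * pbw_monomial m * y"
  shows "eval_pbw (pbw_lift f P) = x * eval_pbw P * y"
  by (induction P) (auto simp: pbw_lift_def eval_pbw_smult assms distrib_left distrib_right
      mult_of_int_left_commute mult.assoc)

fun pbw_insert :: "(nat \<times> nat \<times> nat) \<times> int \<Rightarrow> pbw_poly \<Rightarrow> pbw_poly" where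
  "pbw_insert x [] = [x]"
| "pbw_insert x (y # P) =
    (if fst x = fst y then (fst y, snd x + snd y) # P else y # pbw_insert x P)"

definition pbw_norm :: "pbw_poly \<Rightarrow> pbw_poly" where
  "pbw_norm P = filter (\<lambda>x. snd x \<noteq> 0) (foldr pbw_insert P [])"

lemma eval_pbw_insert: "eval_pbw (pbw_insert (m, q) P) = of_int q * pbw_monomial m + eval_pbw P"
  by (induction P) (auto simp: algebra_simps)

lemma eval_pbw_norm: "eval_pbw (pbw_norm P) = eval_pbw P"
proof -
  have "eval_pbw (filter (\<lambda>x. snd x \<noteq> 0) Q) = eval_pbw Q" for Q
    by (induction Q) auto
  moreover have "eval_pbw (foldr pbw_insert P []) = eval_pbw P"
    by (induction P) (auto simp: eval_pbw_insert)
  ultimately show ?thesis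
    by (simp add: pbw_norm_def)
qed

definition pbw_shift_F :: "nat \<Rightarrow> pbw_poly \<Rightarrow> pbw_poly" where
  "pbw_shift_F k = pbw_lift (\<lambda>(a, b, c). [((a + k, b, c), 1)])"

lemma eval_pbw_shift_F: "eval_pbw (pbw_shift_F k P) = sl2_F ^ k * eval_pbw P"
proof -
  have "sl2_F ^ (a + k) = sl2_F ^ k * sl2_F ^ a" for a
    by (simp add: power_add[symmetric] add.commute)
  then show ?thesis
    unfolding pbw_shift_F_def
    by (intro eval_pbw_lift[where y = 1, simplified]) (auto simp: pbw_monomial_def mult.assoc)
qed

definition pbw_H :: "pbw_poly \<Rightarrow> pbw_poly" where
  "pbw_H = pbw_lift (\<lambda>(a, b, c). [((a, Suc b, c), 1), ((a, b, c), - int (2 * a))])"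

lemma eval_pbw_H: "eval_pbw (pbw_H P) = sl2_H * eval_pbw P"
proof -
  have "sl2_H * pbw_monomial (a, b, c)
      = pbw_monomial (a, Suc b, c) - of_nat (2 * a) * pbw_monomial (a, b, c)" for a b c
    by (simp add: pbw_monomial_def sl2_H_F_pow algebra_simps flip: mult.assoc)
  then show ?thesis
    using eval_pbw_lift[where x = sl2_H and y = 1] by (simp add: pbw_H_def split: prod.splits)
qed

primrec pbw_E_H_pow :: "nat \<Rightarrow> nat \<Rightarrow> pbw_poly" where
  "pbw_E_H_pow 0 c = [((0, 0, Suc c), 1)]"
| "pbw_E_H_pow (Suc b) c = pbw_norm (pbw_H (pbw_E_H_pow b c) @ pbw_smult (-2) (pbw_E_H_pow b c))"

lemma eval_pbw_E_H_pow: "eval_pbw (pbw_E_H_pow b c) = sl2_E * pbw_monomial (0, b, c)"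
proof (induction b)
  case 0
  then show ?case by (simp add: pbw_monomial_def)
next
  case (Suc b)
  have "sl2_E * pbw_monomial (0, Suc b, c) = (sl2_E * sl2_H) * pbw_monomial (0, b, c)"
    by (simp add: pbw_monomial_def mult.assoc)
  also have "\<dots> = sl2_H * (sl2_E * pbw_monomial (0, b, c)) - 2 * (sl2_E * pbw_monomial (0, b, c))"
    by (simp add: sl2_E_H algebra_simps)
  finally show ?case
    by (simp add: Suc eval_pbw_norm eval_pbw_H eval_pbw_smult)
qed

fun pbw_E_mon :: "nat \<times> nat \<times> nat \<Rightarrow> pbw_poly" where
  "pbw_E_mon (0, b, c) = pbw_E_H_pow b c"
| "pbw_E_mon (Suc a, b, c) = pbw_shift_F (Suc a) (pbw_E_H_pow b c)
     @ [((a, Suc b, c), int (Suc a)), ((a, b, c), - int (Suc a * a))]"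

lemma eval_pbw_E_mon: "eval_pbw (pbw_E_mon m) = sl2_E * pbw_monomial m"
proof (cases m rule: pbw_E_mon.cases)
  case (1 b c)
  then show ?thesis by (simp add: eval_pbw_E_H_pow)
next
  case (2 a b c)
  have "sl2_E * pbw_monomial (Suc a, b, c) = (sl2_E * sl2_F ^ Suc a) * (sl2_H ^ b * sl2_E ^ c)"
    by (simp add: pbw_monomial_def mult.assoc)
  also have "\<dots> = sl2_F ^ Suc a * (sl2_E * pbw_monomial (0, b, c))
      + of_nat (Suc a) * pbw_monomial (a, Suc b, c) - of_nat (Suc a * a) * pbw_monomial (a, b, c)"
    unfolding sl2_E_F_pow by (simp add: pbw_monomial_def algebra_simps del: of_nat_Suc of_nat_mult)
  finally show ?thesis
    using 2 by (simp add: eval_pbw_shift_F eval_pbw_E_H_pow algebra_simps)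
qed

definition pbw_E :: "pbw_poly \<Rightarrow> pbw_poly" where
  "pbw_E = pbw_lift pbw_E_mon"

lemma eval_pbw_E: "eval_pbw (pbw_E P) = sl2_E * eval_pbw P"
  unfolding pbw_E_def by (rule eval_pbw_lift[where y = 1, simplified]) (rule eval_pbw_E_mon)

definition pbw_times_monomial :: "nat \<times> nat \<times> nat \<Rightarrow> pbw_poly \<Rightarrow> pbw_poly" where
  "pbw_times_monomial m Q = (case m of (a, b, c) \<Rightarrow>
     pbw_shift_F a (((pbw_norm \<circ> pbw_H) ^^ b) (((pbw_norm \<circ> pbw_E) ^^ c) Q)))"

lemma eval_pbw_times_monomial: "eval_pbw (pbw_times_monomial m Q) = pbw_monomial m * eval_pbw Q"
proof -
  have H: "eval_pbw (((pbw_norm \<circ> pbw_H) ^^ b) Q) = sl2_H ^ b * eval_pbw Q" for b Q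
    by (induction b) (simp_all add: eval_pbw_norm eval_pbw_H mult.assoc)
  have E: "eval_pbw (((pbw_norm \<circ> pbw_E) ^^ c) Q) = sl2_E ^ c * eval_pbw Q" for c
    by (induction c) (simp_all add: eval_pbw_norm eval_pbw_E mult.assoc)
  show ?thesis
    by (simp add: pbw_times_monomial_def pbw_monomial_def eval_pbw_shift_F H E mult.assoc
        split: prod.splits)
qed

definition pbw_times :: "pbw_poly \<Rightarrow> pbw_poly \<Rightarrow> pbw_poly" where
  "pbw_times P Q = pbw_norm (pbw_lift (\<lambda>m. pbw_times_monomial m Q) P)"

lemma eval_pbw_times: "eval_pbw (pbw_times P Q) = eval_pbw P * eval_pbw Q"
  unfolding pbw_times_def eval_pbw_norm
  by (rule eval_pbw_lift[where x = 1, simplified]) (rule eval_pbw_times_monomial)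

datatype sl2_expr = Gen sl2gen | Const int | Add sl2_expr sl2_expr | Diff sl2_expr sl2_expr
  | Mult sl2_expr sl2_expr

primrec eval_sl2_expr :: "sl2_expr \<Rightarrow> usl2" where
  "eval_sl2_expr (Gen g) = (case g of gE \<Rightarrow> sl2_E | gF \<Rightarrow> sl2_F | gH \<Rightarrow> sl2_H)"
| "eval_sl2_expr (Const q) = of_int q"
| "eval_sl2_expr (Add x y) = eval_sl2_expr x + eval_sl2_expr y"
| "eval_sl2_expr (Diff x y) = eval_sl2_expr x - eval_sl2_expr y"
| "eval_sl2_expr (Mult x y) = eval_sl2_expr x * eval_sl2_expr y"

primrec pbw_of :: "sl2_expr \<Rightarrow> pbw_poly" where
  "pbw_of (Gen g) = [((case g of gE \<Rightarrow> (0, 0, 1) | gF \<Rightarrow> (1, 0, 0) | gH \<Rightarrow> (0, 1, 0)), 1)]"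
| "pbw_of (Const q) = pbw_norm [((0, 0, 0), q)]"
| "pbw_of (Add x y) = pbw_norm (pbw_of x @ pbw_of y)"
| "pbw_of (Diff x y) = pbw_norm (pbw_of x @ pbw_smult (-1) (pbw_of y))"
| "pbw_of (Mult x y) = pbw_times (pbw_of x) (pbw_of y)"

lemma eval_pbw_of: "eval_pbw (pbw_of x) = eval_sl2_expr x"
  by (induction x) (auto simp: eval_pbw_norm eval_pbw_smult eval_pbw_times pbw_monomial_def
      split: sl2gen.splits)

lemma eval_sl2_expr_eq_0: "pbw_of x = [] \<Longrightarrow> eval_sl2_expr x = 0"
  using eval_pbw_of[of x] by simp

definition sharp_usl2 :: "regen ncpoly \<Rightarrow> usl2" where
  "sharp_usl2 a = abs_usl2 (sharp a)"

lemma nc_finite_sharp [simp]: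
  assumes "nc_finite a"
  shows "nc_finite (sharp a)"
proof -
  have "nc_finite (sharp_gen g)" for g
    by (cases g) (simp_all add: sharp_gen_def uE_def uF_def uH_def)
  then show ?thesis
    unfolding sharp_def by (rule nc_finite_subst[OF assms])
qed

lemma nc_finite_Re_gens [simp]: "nc_finite rA" "nc_finite rB" "nc_finite rC" "nc_finite rD"
  by (simp_all add: rA_def rB_def rC_def rD_def)

lemma sharp_usl2_add: "nc_finite a \<Longrightarrow> nc_finite b \<Longrightarrow> sharp_usl2 (nc_add a b) = sharp_usl2 a + sharp_usl2 b"
  unfolding sharp_usl2_def sharp_def
  by (simp add: nc_subst_add abs_usl2_add nc_finite_sharp[unfolded sharp_def])

lemma sharp_usl2_sub: "nc_finite a \<Longrightarrow> nc_finite b \<Longrightarrow> sharp_usl2 (nc_sub a b) = sharp_usl2 a - sharp_usl2 b"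
  unfolding sharp_usl2_def sharp_def
  by (simp add: nc_subst_sub abs_usl2_sub nc_finite_sharp[unfolded sharp_def])

lemma sharp_usl2_mult: "nc_finite a \<Longrightarrow> nc_finite b \<Longrightarrow> sharp_usl2 (nc_mult a b) = sharp_usl2 a * sharp_usl2 b"
  unfolding sharp_usl2_def sharp_def
  by (simp add: nc_subst_mult abs_usl2_mult nc_finite_sharp[unfolded sharp_def])

lemma sharp_usl2_smult: "nc_finite a \<Longrightarrow> sharp_usl2 (nc_smult c a) = usl2_const c * sharp_usl2 a"
  unfolding sharp_usl2_def sharp_def
  by (simp add: nc_subst_smult abs_usl2_smult nc_finite_sharp[unfolded sharp_def])

lemma sharp_usl2_comm:
  "nc_finite a \<Longrightarrow> nc_finite b \<Longrightarrow> sharp_usl2 (nc_comm a b) = sharp_usl2 a * sharp_usl2 b - sharp_usl2 b * sharp_usl2 a"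
  by (simp add: nc_comm_def sharp_usl2_sub sharp_usl2_mult)

lemma sharp_usl2_one: "sharp_usl2 nc_one = 1"
  by (simp add: sharp_usl2_def sharp_def abs_usl2_one)

lemma sharp_usl2_pow: "nc_finite a \<Longrightarrow> sharp_usl2 (nc_pow a n) = sharp_usl2 a ^ n"
  by (induction n) (simp_all add: sharp_usl2_one sharp_usl2_mult)

lemma sharp_usl2_sum:
  "finite I \<Longrightarrow> (\<And>i. i \<in> I \<Longrightarrow> nc_finite (F i)) \<Longrightarrow>
     sharp_usl2 (\<lambda>v. \<Sum>i\<in>I. F i v) = (\<Sum>i\<in>I. sharp_usl2 (F i))"
proof (induction I rule: finite_induct)
  case empty
  have "(\<lambda>v. \<Sum>i\<in>{}. F i v) = nc_zero" by (simp add: nc_zero_def fun_eq_iff)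
  then show ?case by (simp add: sharp_usl2_def sharp_def abs_usl2_zero)
next
  case (insert i I)
  have "(\<lambda>v. \<Sum>i\<in>insert i I. F i v) = nc_add (F i) (\<lambda>v. \<Sum>i\<in>I. F i v)"
    using insert by (simp add: nc_add_def fun_eq_iff)
  then show ?case using insert by (simp add: sharp_usl2_add)
qed

lemma nc_finite_nc_eval2 [simp]: "nc_finite X \<Longrightarrow> nc_finite Y \<Longrightarrow> nc_finite (nc_eval2 X Y p)"
  unfolding nc_eval2_def by (intro nc_finite_sum) auto

lemma sharp_usl2_nc_eval2:
  assumes "nc_finite X" "nc_finite Y"
  shows "sharp_usl2 (nc_eval2 X Y p) = (\<Sum>i\<le>degree p. \<Sum>j\<le>degree (coeff p i).
      usl2_const (coeff (coeff p i) j) * (sharp_usl2 X ^ i * sharp_usl2 Y ^ j))"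
  unfolding nc_eval2_def using assms
  by (simp add: sharp_usl2_sum sharp_usl2_smult sharp_usl2_mult sharp_usl2_pow)

definition poly_usl2 :: "complex poly \<Rightarrow> usl2 \<Rightarrow> usl2" where
  "poly_usl2 p x = (\<Sum>i\<le>degree p. usl2_const (coeff p i) * x ^ i)"

lemma poly_usl2_eq_sum: "degree p < n \<Longrightarrow> poly_usl2 p x = (\<Sum>i<n. usl2_const (coeff p i) * x ^ i)"
  unfolding poly_usl2_def atMost_atLeast0
  by (rule sum.mono_neutral_left) (auto simp: coeff_eq_0)

lemma poly_usl2_0 [simp]: "poly_usl2 0 x = 0"
  by (simp add: poly_usl2_def)

lemma poly_usl2_pCons: "poly_usl2 (pCons c p) x = usl2_const c + poly_usl2 p x * x"
proof -
  have "poly_usl2 (pCons c p) x = (\<Sum>i<Suc (Suc (degree p)). usl2_const (coeff (pCons c p) i) * x ^ i)"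
    by (rule poly_usl2_eq_sum) (use degree_pCons_le[of c p] in auto)
  also have "\<dots> = usl2_const c + (\<Sum>i<Suc (degree p). usl2_const (coeff p i) * x ^ i * x)"
    by (subst sum.lessThan_Suc_shift) (simp add: power_Suc2 mult.assoc del: power_Suc sum.lessThan_Suc)
  also have "\<dots> = usl2_const c + poly_usl2 p x * x"
    by (simp add: poly_usl2_eq_sum[of p "Suc (degree p)"] sum_distrib_right del: sum.lessThan_Suc)
  finally show ?thesis .
qed

lemma poly_usl2_add: "poly_usl2 (p + q) x = poly_usl2 p x + poly_usl2 q x"
proof -
  let ?n = "Suc (max (degree p) (degree q))"
  have "degree (p + q) < ?n" using degree_add_le_max[of p q] by auto
  then show ?thesis
    by (simp add: poly_usl2_eq_sum[of _ ?n] usl2_const_add distrib_right sum.distrib)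
qed

lemma poly_usl2_smult: "poly_usl2 (smult c p) x = usl2_const c * poly_usl2 p x"
proof -
  have "degree (smult c p) < Suc (degree p)" using degree_smult_le[of c p] by auto
  then show ?thesis
    by (simp add: poly_usl2_eq_sum[of _ "Suc (degree p)"] usl2_const_mult sum_distrib_left
        mult.assoc del: sum.lessThan_Suc)
qed

lemma poly_usl2_commute: "x * poly_usl2 p x = poly_usl2 p x * x"
  by (induction p) (simp_all add: poly_usl2_pCons distrib_left distrib_right usl2_const_commute
      flip: mult.assoc)

lemma poly_usl2_mult: "poly_usl2 (p * q) x = poly_usl2 p x * poly_usl2 q x"
proof (induction p)
  case (pCons c p)
  have "poly_usl2 (pCons c p * q) x = usl2_const c * poly_usl2 q x + poly_usl2 (p * q) x * x"
    by (simp add: poly_usl2_add poly_usl2_smult poly_usl2_pCons)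
  also have "\<dots> = (usl2_const c + poly_usl2 p x * x) * poly_usl2 q x"
    by (simp add: pCons.IH distrib_right mult.assoc poly_usl2_commute)
  finally show ?case by (simp add: poly_usl2_pCons)
qed simp

lemma poly_usl2_one: "poly_usl2 1 x = 1"
  by (simp add: poly_usl2_def)

lemma poly_usl2_X: "poly_usl2 [:0, 1:] x = x"
  by (simp add: poly_usl2_pCons)

lemma poly_usl2_power: "poly_usl2 (p ^ n) x = poly_usl2 p x ^ n"
  by (induction n) (simp_all add: poly_usl2_mult poly_usl2_one)

lemma poly_usl2_sum: "poly_usl2 (\<Sum>i\<in>I. f i) x = (\<Sum>i\<in>I. poly_usl2 (f i) x)"
  by (induction I rule: infinite_finite_induct) (simp_all add: poly_usl2_add)

lemma poly_usl2_poly: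
  fixes p :: "complex poly poly"
  shows "(\<Sum>i\<le>degree p. \<Sum>j\<le>degree (coeff p i). usl2_const (coeff (coeff p i) j) * (poly_usl2 g t ^ i * t ^ j))
    = poly_usl2 (poly p g) t"
proof -
  have coeff_eq: "(\<Sum>j\<le>degree (coeff p i). smult (coeff (coeff p i) j) (g ^ i * [:0, 1:] ^ j))
      = coeff p i * g ^ i" for i
  proof -
    have "coeff p i * g ^ i = g ^ i * (\<Sum>j\<le>degree (coeff p i). monom (coeff (coeff p i) j) j)"
      by (simp only: poly_as_sum_of_monoms mult.commute)
    then show ?thesis
      by (simp add: sum_distrib_left monom_altdef mult_smult_right)
  qed
  have "(\<Sum>i\<le>degree p. \<Sum>j\<le>degree (coeff p i). usl2_const (coeff (coeff p i) j) * (poly_usl2 g t ^ i * t ^ j))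
     = poly_usl2 (\<Sum>i\<le>degree p. \<Sum>j\<le>degree (coeff p i). smult (coeff (coeff p i) j) (g ^ i * [:0, 1:] ^ j)) t"
    by (simp add: poly_usl2_sum poly_usl2_smult poly_usl2_mult poly_usl2_power poly_usl2_X)
  also have "\<dots> = poly_usl2 (poly p g) t"
    by (simp add: coeff_eq poly_altdef)
  finally show ?thesis .
qed

section \<open>The images of \<open>\<Omega>\<^sub>A\<close>, \<open>\<Omega>\<^sub>B\<close>, \<open>\<Omega>\<^sub>C\<close>\<close>

abbreviation (input) xE :: sl2_expr where "xE \<equiv> Gen gE"
abbreviation (input) xF :: sl2_expr where "xF \<equiv> Gen gF"
abbreviation (input) xH :: sl2_expr where "xH \<equiv> Gen gH"

text \<open>Sixteen times the images of \<open>A\<close>, \<open>B\<close>, \<open>C\<close> and sixty-four times the image of \<open>\<Delta>\<close>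
  have integer coefficients; for \<open>C\<close> this uses \<open>(\<i>E - \<i>F)\<^sup>2 = -(E - F)\<^sup>2\<close>.\<close>

definition expr_A :: sl2_expr where
  "expr_A = Mult (Diff (Add xE xF) (Const 2)) (Add (Add xE xF) (Const 2))"

definition expr_B :: sl2_expr where
  "expr_B = Mult (Diff xH (Const 2)) (Add xH (Const 2))"

definition expr_C :: sl2_expr where
  "expr_C = Diff (Mult (Const (-1)) (Mult (Diff xE xF) (Diff xE xF))) (Const 4)"

definition expr_D :: sl2_expr where
  "expr_D = Diff (Mult (Add xH (Const 2)) (Mult xF xF)) (Mult (Diff xH (Const 2)) (Mult xE xE))"

lemma sharp_usl2_gen: "sharp_usl2 (nc_gen g) = abs_usl2 (sharp_gen g)"
  by (simp add: sharp_usl2_def sharp_def)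

lemmas abs_usl2_simps = abs_usl2_mult abs_usl2_add abs_usl2_sub abs_usl2_smult
  usl2_const_def[symmetric] sl2_E_def[symmetric] sl2_F_def[symmetric] sl2_H_def[symmetric]

lemma sharp_usl2_rA: "sharp_usl2 rA = usl2_const (1/16) * eval_sl2_expr expr_A"
  by (simp add: rA_def sharp_usl2_gen sharp_gen_def abs_usl2_simps expr_A_def)

lemma sharp_usl2_rB: "sharp_usl2 rB = usl2_const (1/16) * eval_sl2_expr expr_B"
  by (simp add: rB_def sharp_usl2_gen sharp_gen_def abs_usl2_simps expr_B_def)

lemma sharp_usl2_rD: "sharp_usl2 rD = usl2_const (1/64) * eval_sl2_expr expr_D"
  by (simp add: rD_def sharp_usl2_gen sharp_gen_def abs_usl2_simps expr_D_def)

lemma sharp_usl2_rC: "sharp_usl2 rC = usl2_const (1/16) * eval_sl2_expr expr_C"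
proof -
  let ?y = "sl2_E - sl2_F" and ?i = "usl2_const \<i>"
  have "?i * ?y * (?i * ?y) = - (?y * ?y)"
    by (simp add: mult.assoc usl2_const_left_commute[of ?y] usl2_const_mult_left usl2_const_minus)
  moreover have "(?i * ?y - 2) * (?i * ?y + 2) = ?i * ?y * (?i * ?y) - 2 * 2"
    by (simp add: algebra_simps mult_2 mult_2_right)
  ultimately have "(?i * sl2_E - ?i * sl2_F - 2) * (?i * sl2_E - ?i * sl2_F + 2) = - (?y * ?y) - 4"
    by (simp add: right_diff_distrib)
  then show ?thesis
    by (simp add: rC_def sharp_usl2_gen sharp_gen_def abs_usl2_simps expr_C_def)
qed

lemma rescale_commutator_relation:
  assumes "a = usl2_const (1/16) * a'" "b = usl2_const (1/16) * b'" "c = usl2_const (1/16) * c'"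
    and "d = usl2_const (1/64) * d'"
  shows "(a * d - d * a) + (a * b - c * a)
    = usl2_const (1/1024) * ((a' * d' - d' * a') + 4 * (a' * b' - c' * a'))"
proof -
  have four: "(4 :: usl2) = usl2_const 4" by simp
  show ?thesis
    unfolding assms four
    by (simp add: distrib_left right_diff_distrib usl2_const_left_commute[of a']
        usl2_const_left_commute[of b'] usl2_const_left_commute[of c'] usl2_const_left_commute[of d']
        usl2_const_mult_left mult.assoc del: usl2_const_numeral)
qed

lemma commutator_relation_vanishes:
  assumes "a = usl2_const (1/16) * eval_sl2_expr ea" "b = usl2_const (1/16) * eval_sl2_expr eb"
    "c = usl2_const (1/16) * eval_sl2_expr ec"
    and "pbw_of (Add (Diff (Mult ea expr_D) (Mult expr_D ea))
                     (Mult (Const 4) (Diff (Mult ea eb) (Mult ec ea)))) = []"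
  shows "(a * sharp_usl2 rD - sharp_usl2 rD * a) + (a * b - c * a) = 0"
  using rescale_commutator_relation[OF assms(1-3) sharp_usl2_rD] eval_sl2_expr_eq_0[OF assms(4)]
  by simp

lemma nc_finite_Re_central [simp]:
  "nc_finite r_alpha" "nc_finite r_beta" "nc_finite r_gamma" "nc_finite r_delta"
  by (simp_all add: r_alpha_def r_beta_def r_gamma_def r_delta_def)

lemmas sharp_usl2_simps = sharp_usl2_add sharp_usl2_sub sharp_usl2_mult sharp_usl2_smult
  sharp_usl2_comm nc_finite_Re_gens nc_finite_Re_central nc_finite_add nc_finite_sub
  nc_finite_mult nc_finite_smult nc_finite_comm

lemma sharp_usl2_alpha: "sharp_usl2 r_alpha = 0"
  unfolding r_alpha_def
  by (simp only: sharp_usl2_simps)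
    (rule commutator_relation_vanishes[OF sharp_usl2_rA sharp_usl2_rC sharp_usl2_rB], code_simp)

lemma sharp_usl2_beta: "sharp_usl2 r_beta = 0"
  unfolding r_beta_def
  by (simp only: sharp_usl2_simps)
    (rule commutator_relation_vanishes[OF sharp_usl2_rB sharp_usl2_rA sharp_usl2_rC], code_simp)

lemma sharp_usl2_gamma: "sharp_usl2 r_gamma = 0"
  unfolding r_gamma_def
  by (simp only: sharp_usl2_simps)
    (rule commutator_relation_vanishes[OF sharp_usl2_rC sharp_usl2_rB sharp_usl2_rA], code_simp)

definition omega_poly :: "complex poly" where
  "omega_poly = [:9/256, 3/32, -3/16:]"

lemma rescale_Omega:
  assumes "a = usl2_const (1/16) * a'" "b = usl2_const (1/16) * b'" "c = usl2_const (1/16) * c'"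
    and "d = usl2_const (1/64) * d'"
  shows "d * d + usl2_const (1/2) * (b * (a * c) + c * (a * b)) + a * a - a * (a + b + c)
    = usl2_const (1/8192) * (2 * (d' * d') + (b' * (a' * c') + c' * (a' * b')) - 32 * (a' * b' + a' * c'))"
proof -
  have numerals: "(2 :: usl2) = usl2_const 2" "(32 :: usl2) = usl2_const 32" by simp_all
  show ?thesis
    unfolding assms numerals
    by (simp add: distrib_left distrib_right right_diff_distrib usl2_const_left_commute[of a']
        usl2_const_left_commute[of b'] usl2_const_left_commute[of c'] usl2_const_left_commute[of d']
        usl2_const_mult_left mult.assoc del: usl2_const_numeral)
qed

lemma rescale_omega_poly:
  "poly_usl2 omega_poly (usl2_const (1/16) * t) = usl2_const (1/8192) * (288 + 48 * t - 6 * (t * t))"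
proof -
  have numerals: "(288 :: usl2) = usl2_const 288" "(48 :: usl2) = usl2_const 48"
    "(6 :: usl2) = usl2_const 6" by simp_all
  show ?thesis
    unfolding numerals
    by (simp add: omega_poly_def poly_usl2_pCons distrib_left distrib_right right_diff_distrib
        left_diff_distrib usl2_const_left_commute[of t] usl2_const_mult_left mult.assoc
        usl2_const_minus flip: usl2_const_mult
        del: usl2_const_numeral)
qed

lemma Omega_expression_eq_omega_poly:
  assumes a: "a = usl2_const (1/16) * eval_sl2_expr ea"
    and b: "b = usl2_const (1/16) * eval_sl2_expr eb"
    and c: "c = usl2_const (1/16) * eval_sl2_expr ec"
    and t: "t = a + b + c"
    and check: "pbw_of (Diff
        (Diff (Add (Mult (Const 2) (Mult expr_D expr_D)) (Add (Mult eb (Mult ea ec)) (Mult ec (Mult ea eb))))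
              (Mult (Const 32) (Add (Mult ea eb) (Mult ea ec))))
        (Diff (Add (Const 288) (Mult (Const 48) (Add (Add ea eb) ec)))
              (Mult (Const 6) (Mult (Add (Add ea eb) ec) (Add (Add ea eb) ec))))) = []"
  shows "sharp_usl2 rD * sharp_usl2 rD + usl2_const (1/2) * (b * (a * c) + c * (a * b)) + a * a
    - a * t = poly_usl2 omega_poly t"
proof -
  have "t = usl2_const (1/16) * eval_sl2_expr (Add (Add ea eb) ec)"
    by (simp add: t a b c distrib_left)
  then show ?thesis
    using rescale_Omega[OF a b c sharp_usl2_rD] eval_sl2_expr_eq_0[OF check]
    by (simp add: rescale_omega_poly t)
qed

lemma sharp_usl2_delta: "sharp_usl2 r_delta = sharp_usl2 rA + sharp_usl2 rB + sharp_usl2 rC"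
  unfolding r_delta_def by (simp only: sharp_usl2_simps)

lemma sharp_usl2_Omega:
  assumes "\<Omega> \<in> {OmegaA, OmegaB, OmegaC}"
  shows "sharp_usl2 \<Omega> = poly_usl2 omega_poly (sharp_usl2 r_delta)"
proof -
  note simps = sharp_usl2_simps sharp_usl2_alpha sharp_usl2_beta sharp_usl2_gamma mult_zero_right
    diff_self add_0_right
  have "sharp_usl2 OmegaA = poly_usl2 omega_poly (sharp_usl2 r_delta)"
    unfolding OmegaA_def r_mult3_def
    by (simp only: simps,
        rule Omega_expression_eq_omega_poly[OF sharp_usl2_rA sharp_usl2_rB sharp_usl2_rC sharp_usl2_delta])
      code_simp
  moreover have "sharp_usl2 OmegaB = poly_usl2 omega_poly (sharp_usl2 r_delta)"
    unfolding OmegaB_def r_mult3_def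
    by (simp only: simps, rule Omega_expression_eq_omega_poly[OF sharp_usl2_rB sharp_usl2_rC sharp_usl2_rA])
      (simp add: sharp_usl2_delta ac_simps, code_simp)
  moreover have "sharp_usl2 OmegaC = poly_usl2 omega_poly (sharp_usl2 r_delta)"
    unfolding OmegaC_def r_mult3_def
    by (simp only: simps, rule Omega_expression_eq_omega_poly[OF sharp_usl2_rC sharp_usl2_rA sharp_usl2_rB])
      (simp add: sharp_usl2_delta ac_simps, code_simp)
  ultimately show ?thesis
    using assms by auto
qed

section \<open>Polynomials in \<open>\<sharp>(\<delta>)\<close> act faithfully on the Verma module\<close>

lemma usl2_act_add: "usl2_act (x + y) v k = usl2_act x v k + usl2_act y v k"
  by transfer (simp add: verma_act_add usl2_rel_def)

lemma usl2_act_diff: "usl2_act (x - y) v k = usl2_act x v k - usl2_act y v k"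
  by transfer (simp add: verma_act_sub usl2_rel_def)

lemma usl2_act_const: "usl2_act (usl2_const c) v k = smult c (v k)"
  by (simp add: usl2_const_def usl2_act_abs verma_act_const)

lemma usl2_act_numeral: "usl2_act (numeral n) v k = numeral n * v k"
  using usl2_act_const[of "numeral n" v k] by (simp add: numeral_mult_conv_smult)

lemma usl2_act_scale: "usl2_act x (\<lambda>k. p * v k) = (\<lambda>k. p * usl2_act x v k)"
proof -
  obtain a where "nc_finite a" "x = abs_usl2 a" by (rule usl2_cases)
  then show ?thesis
    by (simp add: usl2_act_abs verma_act_def verma_word_scale sum_distrib_left
        mult.left_commute fun_eq_iff)
qed

lemma usl2_act_sl2_gens:
  "usl2_act sl2_E = verma_E" "usl2_act sl2_F = verma_F" "usl2_act sl2_H = verma_H"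
  by (simp_all add: sl2_E_def sl2_F_def sl2_H_def usl2_act_abs verma_act_gen uE_def uF_def uH_def)

lemma usl2_act_poly_usl2:
  assumes "usl2_act x v = (\<lambda>k. e * v k)"
  shows "usl2_act (poly_usl2 q x) v k = pcompose q e * v k"
proof (induction q arbitrary: k)
  case (pCons c q)
  have "usl2_act (poly_usl2 (pCons c q) x) v k = smult c (v k) + usl2_act (poly_usl2 q x) (usl2_act x v) k"
    by (simp add: poly_usl2_pCons usl2_act_add usl2_act_const usl2_act_mult)
  also have "\<dots> = pcompose (pCons c q) e * v k"
    by (simp add: assms usl2_act_scale pCons.IH pcompose_pCons algebra_simps)
  finally show ?case .
qed (simp add: poly_usl2_def usl2_act_abs[of nc_zero, unfolded abs_usl2_zero])

definition verma_hw :: verma_vec where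
  "verma_hw k = (if k = 0 then 1 else 0)"

text \<open>\<open>\<sharp>(\<delta>) = (\<Lambda> - 6) / 8\<close> for the Casimir \<open>\<Lambda>\<close>, which acts on the highest weight vector by
  \<open>\<lambda>\<^sup>2/2 + \<lambda>\<close>.\<close>

definition delta_eigenvalue :: "complex poly" where
  "delta_eigenvalue = [:-3/4, 1/8, 1/16:]"

lemma sharp_usl2_delta_casimir:
  "sharp_usl2 r_delta = usl2_const (1/16)
     * (2 * (sl2_E * sl2_F) + 2 * (sl2_F * sl2_E) + sl2_H * sl2_H - 12)"
proof -
  have "sharp_usl2 r_delta = usl2_const (1/16) * eval_sl2_expr (Add (Add expr_A expr_B) expr_C)"
    by (simp add: sharp_usl2_delta sharp_usl2_rA sharp_usl2_rB sharp_usl2_rC distrib_left)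
  also have "pbw_of (Diff (Add (Add expr_A expr_B) expr_C)
      (Diff (Add (Add (Mult (Const 2) (Mult xE xF)) (Mult (Const 2) (Mult xF xE))) (Mult xH xH))
        (Const 12))) = []"
    by code_simp
  then have "eval_sl2_expr (Add (Add expr_A expr_B) expr_C)
      = 2 * (sl2_E * sl2_F) + 2 * (sl2_F * sl2_E) + sl2_H * sl2_H - 12"
    using eval_sl2_expr_eq_0 by fastforce
  finally show ?thesis .
qed

lemma usl2_act_sharp_delta:
  "usl2_act (sharp_usl2 r_delta) verma_hw = (\<lambda>k. delta_eigenvalue * verma_hw k)"
proof
  fix k
  have "usl2_act (sharp_usl2 r_delta) verma_hw k = smult (1/16) (2 * verma_E (verma_F verma_hw) k
      + 2 * verma_F (verma_E verma_hw) k + verma_H (verma_H verma_hw) k - 12 * verma_hw k)"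
    by (simp add: sharp_usl2_delta_casimir usl2_act_mult usl2_act_add usl2_act_diff usl2_act_const
        usl2_act_numeral usl2_act_sl2_gens smult_add_right smult_diff_right)
  also have "\<dots> = delta_eigenvalue * verma_hw k"
    by (cases k) (auto simp: verma_E_def verma_F_def verma_H_def verma_hw_def delta_eigenvalue_def
        algebra_simps numeral_poly)
  finally show "usl2_act (sharp_usl2 r_delta) verma_hw k = delta_eigenvalue * verma_hw k" .
qed

lemma poly_usl2_sharp_delta_eq_0_iff: "poly_usl2 q (sharp_usl2 r_delta) = 0 \<longleftrightarrow> q = 0"
proof
  assume "poly_usl2 q (sharp_usl2 r_delta) = 0"
  then have "usl2_act (poly_usl2 q (sharp_usl2 r_delta)) verma_hw 0 = 0"
    using usl2_act_abs[of nc_zero] by (simp add: abs_usl2_zero)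
  then have "pcompose q delta_eigenvalue = 0"
    by (simp add: usl2_act_poly_usl2[OF usl2_act_sharp_delta] verma_hw_def)
  then show "q = 0"
    by (rule pcompose_eq_0) (simp add: delta_eigenvalue_def)
qed simp

lemma f_xy_dvd_iff: "f_xy dvd p \<longleftrightarrow> [:- omega_poly, 1:] dvd p"
proof -
  have f_xy: "f_xy = smult [:256:] [:- omega_poly, 1:]"
    by (simp add: f_xy_def omega_poly_def)
  have "[:- omega_poly, 1:] dvd f_xy"
    unfolding f_xy by (rule dvd_smult) simp
  moreover have "[:- omega_poly, 1:] = smult [:1/256:] f_xy"
    by (simp add: f_xy)
  then have "f_xy dvd [:- omega_poly, 1:]"
    by (metis dvd_smult dvd_refl)
  ultimately show ?thesis
    using dvd_trans by blast
qed

lemma nc_finite_Omegas: "nc_finite OmegaA" "nc_finite OmegaB" "nc_finite OmegaC"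
  by (simp_all add: OmegaA_def OmegaB_def OmegaC_def r_mult3_def)

theorem lemma5p1:
  fixes \<Omega> :: "regen ncpoly" and p :: "complex poly poly"
  assumes "\<Omega> \<in> {OmegaA, OmegaB, OmegaC}"
  shows "zero_in_Usl2 (sharp (nc_eval2 \<Omega> r_delta p)) \<longleftrightarrow> f_xy dvd p"
proof -
  have fin: "nc_finite \<Omega>"
    using assms nc_finite_Omegas by auto
  have "zero_in_Usl2 (sharp (nc_eval2 \<Omega> r_delta p)) \<longleftrightarrow> sharp_usl2 (nc_eval2 \<Omega> r_delta p) = 0"
    by (simp add: zero_in_Usl2_def sharp_usl2_def abs_usl2_eq_0_iff fin)
  also have "sharp_usl2 (nc_eval2 \<Omega> r_delta p) = poly_usl2 (poly p omega_poly) (sharp_usl2 r_delta)"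
    by (simp add: sharp_usl2_nc_eval2 fin sharp_usl2_Omega[OF assms] poly_usl2_poly)
  also have "\<dots> = 0 \<longleftrightarrow> poly p omega_poly = 0"
    by (rule poly_usl2_sharp_delta_eq_0_iff)
  also have "\<dots> \<longleftrightarrow> [:- omega_poly, 1:] dvd p"
    by (rule poly_eq_0_iff_dvd)
  also have "\<dots> \<longleftrightarrow> f_xy dvd p"
    by (rule f_xy_dvd_iff[symmetric])
  finally show ?thesis .
qed

end
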